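(* Let $p(y)$ be a probability distribution on $\mathcal{Y}$, $p(z\mid y)$ conditional distributions on $\mathcal{Z}$, $\phi:\mathcal{Y}\times\mathcal{Z}\to\Phi\subseteq\mathbb{R}^{D_\phi}$, and let $\gamma(y)=\mathbb{E}_{z\sim p(z\mid y)}[\phi(y,z)]$ be integrable as a function of $y$. For an integrable $f:\mathcal{Y}\times\Phi\to\mathbb{R}^{D_f}$ write $I(f)=\mathbb{E}_{y\sim p(y)}[f(y,\gamma(y))]$. Suppose an inner estimator $\mathcal{I}$ produces, for each $y\in\mathcal{Y}$, a random estimate $\hat\gamma_y\in\Phi$ of $\gamma(y)$ which is not exact, in the sense that for every $y$ the estimate $\hat\gamma_y$ has nonzero variance (so $\gamma(y)$ is not computed exactly). Then there does not exist an outer estimator $\mathcal{J}$ which, for every integrable $f$, maps a sample set $\hat\zeta=\{(y_1,\hat\gamma_{y_1}),\dots,(y_n,\hat\gamma_{y_n})\}$ (with the $\hat\gamma_{y_i}$ generated by $\mathcal{I}$) to an estimate $\psi(\hat\zeta,f)$ such that simultaneously (i) $\mathbb{E}[\psi(\hat\zeta,f)]=I(f)$ for every integrable $f$, and (ii) $\mathbb{E}_{y\sim p(y)}\big[\mathbb{E}[f(y,\hat\gamma_y)\mid y]\big]-\mathbb{E}[\psi(\hat\zeta,f)]\ge0$ for every integrable $f$. The same conclusion holds if the inequality in (ii) is replaced by $\le 0$.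
   Context: Condition (ii) says that combining the inner estimator with an exact outer expectation never yields a negatively (respectively, in the reversed version, positively) biased estimator for any $f$. The conclusion states that no general-purpose nested estimation scheme of this form can be unbiased for all integrable $f$. *)

theory Defs
  imports "HOL-Probability.Probability"
begin

definition gamma :: "('y \<Rightarrow> 'z measure) \<Rightarrow> ('y \<Rightarrow> 'z \<Rightarrow> real^'p) \<Rightarrow> 'y \<Rightarrow> real^'p" where
  "gamma Pz \<phi> y = (\<integral>z. \<phi> y z \<partial>Pz y)"

text \<open>Variance (total, i.e. trace of covariance) of a random vector with law N,
  as an extended nonnegative real (infinite variance allowed).\<close>
definition vec_variance :: "(real^'p) measure \<Rightarrow> ennreal" where
  "vec_variance N = (\<integral>\<^sup>+ x. ennreal ((norm (x - (\<integral>u. u \<partial>N)))\<^sup>2) \<partial>N)"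

definition nested_integrable ::
  "'y measure \<Rightarrow> ('y \<Rightarrow> (real^'p) measure) \<Rightarrow> ('y \<Rightarrow> real^'p) \<Rightarrow> ('y \<Rightarrow> real^'p \<Rightarrow> real^'k) \<Rightarrow> bool" where
  "nested_integrable M Q g f \<longleftrightarrow>
     (\<lambda>(y, x). f y x) \<in> borel_measurable (M \<Otimes>\<^sub>M borel) \<and>
     integrable M (\<lambda>y. f y (g y)) \<and>
     (\<forall>y\<in>space M. integrable (Q y) (f y)) \<and>
     integrable M (\<lambda>y. \<integral>x. f y x \<partial>Q y)"

text \<open>Law of the sample set zeta = {(y_i, hat gamma_{y_i})}_{i<n}: the y's are drawn
  jointly from D, and given the y's the inner estimates are drawn independently by the
  inner estimator, hat gamma_{y_i} ~ Q (y_i).\<close>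
definition sample_law ::
  "'y measure \<Rightarrow> ('y \<Rightarrow> (real^'p) measure) \<Rightarrow> nat \<Rightarrow> (nat \<Rightarrow> 'y) measure
     \<Rightarrow> ((nat \<Rightarrow> 'y) \<times> (nat \<Rightarrow> real^'p)) measure" where
  "sample_law M Q n D =
     D \<bind> (\<lambda>ys. distr (PiM {..<n} (\<lambda>i. Q (ys i)))
                      (PiM {..<n} (\<lambda>_. M) \<Otimes>\<^sub>M PiM {..<n} (\<lambda>_. (borel :: (real^'p) measure)))
                      (\<lambda>xs. (ys, xs)))"

text \<open>An outer estimator (n, D, psi) with the required properties (i) and (ii);
  s = 1 gives inequality >= 0 in (ii), s = -1 gives <= 0.\<close>
definition good_outer_estimator ::
  "real \<Rightarrow> 'y measure \<Rightarrow> ('y \<Rightarrow> (real^'p) measure) \<Rightarrow> ('y \<Rightarrow> real^'p) \<Rightarrow> nat \<Rightarrow> (nat \<Rightarrow> 'y) measure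
     \<Rightarrow> (((nat \<Rightarrow> 'y) \<times> (nat \<Rightarrow> real^'p)) \<Rightarrow> ('y \<Rightarrow> real^'p \<Rightarrow> real^'k) \<Rightarrow> real^'k) \<Rightarrow> bool" where
  "good_outer_estimator s M Q g n D \<psi> \<longleftrightarrow>
     prob_space D \<and> sets D = sets (PiM {..<n} (\<lambda>_. M)) \<and>
     (\<forall>f. (\<lambda>\<zeta>. \<psi> \<zeta> f) \<in> borel_measurable (sample_law M Q n D)) \<and>
     (\<forall>f. nested_integrable M Q g f \<longrightarrow>
          (\<integral>\<zeta>. \<psi> \<zeta> f \<partial>sample_law M Q n D) = (\<integral>y. f y (g y) \<partial>M)) \<and>
     (\<forall>f. nested_integrable M Q g f \<longrightarrow>
          0 \<le> s *\<^sub>R ((\<integral>y. (\<integral>x. f y x \<partial>Q y) \<partial>M) - (\<integral>\<zeta>. \<psi> \<zeta> f \<partial>sample_law M Q n D)))"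

end

theory Submission
  imports Defs
begin

text \<open>
  Test the estimator on \<open>f(y, x) = -s \<cdot> min 1 \<parallel>x - \<gamma>(y)\<parallel>\<close>, which vanishes at \<open>x = \<gamma>(y)\<close>.
  Unbiasedness (i) gives the outer estimate the mean \<open>I(f) = 0\<close>, so the sign condition (ii)
  reduces to \<open>-E\<^sub>y h(y) \<ge> 0\<close> with \<open>h(y) = E min 1 \<parallel>\<gamma>\<^sub>y - \<gamma>(y)\<parallel>\<close> for the inner estimate
  \<open>\<gamma>\<^sub>y\<close>. But an inner estimate with nonzero variance is not almost surely equal to \<open>\<gamma>(y)\<close>, so
  \<open>h\<close> is strictly positive, and so is its mean.
\<close>

lemma integral_measurable_subprob_algebra2:
  fixes f :: "'a \<Rightarrow> 'b \<Rightarrow> 'c::{banach, second_countable_topology}"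
  assumes f[measurable]: "(\<lambda>(x, y). f x y) \<in> borel_measurable (M \<Otimes>\<^sub>M N)"
    and L[measurable]: "L \<in> M \<rightarrow>\<^sub>M subprob_algebra N"
  shows "(\<lambda>x. integral\<^sup>L (L x) (f x)) \<in> borel_measurable M"
proof -
  note measurable_distr2[measurable]
  have "(\<lambda>x. integral\<^sup>L (distr (L x) (M \<Otimes>\<^sub>M N) (\<lambda>y. (x, y))) (\<lambda>(x, y). f x y)) \<in> borel_measurable M"
    by measurable
  then show ?thesis
    by (rule measurable_cong[THEN iffD1, rotated])
       (simp add: integral_distr measurable_space[OF L] space_subprob_algebra)
qed

lemma integrable_kernel_section_bounded:
  fixes f :: "'a \<Rightarrow> 'b \<Rightarrow> 'c::{banach, second_countable_topology}"
  assumes f: "(\<lambda>(x, y). f x y) \<in> borel_measurable (M \<Otimes>\<^sub>M N)"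
    and L: "L \<in> M \<rightarrow>\<^sub>M prob_algebra N"
    and x: "x \<in> space M"
    and bound: "\<And>y. norm (f x y) \<le> B"
  shows "integrable (L x) (f x)"
proof -
  have Lx: "prob_space (L x)" "sets (L x) = sets N"
    using measurable_space[OF L x] by (auto simp: space_prob_algebra)
  have "f x \<in> borel_measurable (L x)"
    using measurable_Pair2[OF f x] by (simp add: measurable_cong_sets[OF Lx(2) refl])
  then show ?thesis
    using bound by (intro finite_measure.integrable_const_bound[where B=B] prob_space.finite_measure Lx) auto
qed

lemma integrable_kernel_integral_bounded:
  fixes f :: "'a \<Rightarrow> 'b \<Rightarrow> 'c::{banach, second_countable_topology}"
  assumes M: "finite_measure M"
    and f: "(\<lambda>(x, y). f x y) \<in> borel_measurable (M \<Otimes>\<^sub>M N)"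
    and L: "L \<in> M \<rightarrow>\<^sub>M prob_algebra N"
    and bound: "\<And>x y. norm (f x y) \<le> B"
  shows "integrable M (\<lambda>x. \<integral>y. f x y \<partial>L x)"
proof (rule finite_measure.integrable_const_bound[OF M])
  show "(\<lambda>x. \<integral>y. f x y \<partial>L x) \<in> borel_measurable M"
    using f measurable_prob_algebraD[OF L] by (rule integral_measurable_subprob_algebra2)
  have "norm (\<integral>y. f x y \<partial>L x) \<le> B" if x: "x \<in> space M" for x
  proof -
    have "norm (\<integral>y. f x y \<partial>L x) \<le> (\<integral>y. norm (f x y) \<partial>L x)"
      by (rule integral_norm_bound)
    also have "\<dots> \<le> B"
      using measurable_space[OF L x] integrable_kernel_section_bounded[OF f L x bound] bound
      by (intro prob_space.integral_le_const) (auto simp: space_prob_algebra)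
    finally show ?thesis .
  qed
  then show "AE x in M. norm (\<integral>y. f x y \<partial>L x) \<le> B" by auto
qed

lemma nested_integrable_bounded:
  fixes f :: "'y \<Rightarrow> real^'p \<Rightarrow> real^'k"
  assumes M: "finite_measure M"
    and Q: "Q \<in> M \<rightarrow>\<^sub>M prob_algebra borel"
    and g[measurable]: "g \<in> borel_measurable M"
    and f[measurable]: "(\<lambda>(y, x). f y x) \<in> borel_measurable (M \<Otimes>\<^sub>M borel)"
    and bound: "\<And>y x. norm (f y x) \<le> B"
  shows "nested_integrable M Q g f"
  unfolding nested_integrable_def
proof (intro conjI ballI f)
  have "(\<lambda>y. f y (g y)) \<in> borel_measurable M"
    using measurable_Pair_compose_split[OF f measurable_ident_sets[OF refl] g] by simp
  then show "integrable M (\<lambda>y. f y (g y))"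
    using bound by (intro finite_measure.integrable_const_bound[OF M, where B=B]) auto
  show "integrable (Q y) (f y)" if "y \<in> space M" for y
    using f Q that bound by (rule integrable_kernel_section_bounded)
  show "integrable M (\<lambda>y. \<integral>x. f y x \<partial>Q y)"
    using M f Q bound by (rule integrable_kernel_integral_bounded)
qed

lemma (in prob_space) integral_pos:
  fixes f :: "'a \<Rightarrow> real"
  assumes "integrable M f" "\<And>x. x \<in> space M \<Longrightarrow> 0 < f x"
  shows "0 < (\<integral>x. f x \<partial>M)"
proof -
  have "(\<integral>x. f x \<partial>M) \<noteq> 0"
  proof
    assume "(\<integral>x. f x \<partial>M) = 0"
    then have "AE x in M. f x = 0"
      using assms by (subst integral_nonneg_eq_0_iff_AE[symmetric]) (auto simp: less_imp_le)
    with AE_space have "AE x in M. False"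
      by eventually_elim (use assms(2) in fastforce)
    then show False by simp
  qed
  moreover have "0 \<le> (\<integral>x. f x \<partial>M)"
    using assms(2) by (simp add: integral_nonneg less_imp_le)
  ultimately show ?thesis by simp
qed

lemma vec_variance_eq_0_if_AE_eq:
  fixes a :: "real^'p"
  assumes N: "prob_space N" "sets N = sets borel" and a: "AE x in N. x = a"
  shows "vec_variance N = 0"
proof -
  have "(\<integral>u. u \<partial>N) = (\<integral>u. a \<partial>N)"
    using a by (intro integral_cong_AE) (simp_all add: measurable_cong_sets[OF N(2) refl])
  also have "\<dots> = a"
    using prob_space.prob_space[OF N(1)] by simp
  finally have "vec_variance N = (\<integral>\<^sup>+x. ennreal ((norm (x - a))\<^sup>2) \<partial>N)"
    by (simp add: vec_variance_def)
  also have "\<dots> = (\<integral>\<^sup>+x. 0 \<partial>N)"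
    using a by (intro nn_integral_cong_AE) auto
  finally show ?thesis by simp
qed

lemma AE_eq_if_integral_truncated_dist_eq_0:
  fixes a :: "'a::metric_space"
  assumes N: "prob_space N" "sets N = sets borel"
    and int0: "(\<integral>x. min 1 (dist x a) \<partial>N) = 0"
  shows "AE x in N. x = a"
proof -
  have "(\<lambda>x. min 1 (dist x a)) \<in> borel_measurable N"
    unfolding measurable_cong_sets[OF N(2) refl]
    by (intro borel_measurable_continuous_onI continuous_intros)
  then have "integrable N (\<lambda>x. min 1 (dist x a))"
    by (intro finite_measure.integrable_const_bound[where B=1] prob_space.finite_measure N) auto
  then have "AE x in N. min 1 (dist x a) = 0"
    using int0 by (subst integral_nonneg_eq_0_iff_AE[symmetric]) auto
  then show ?thesis
    by eventually_elim (simp add: min_def split: if_splits)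
qed

lemma integral_truncated_dist_pos_if_vec_variance_neq_0:
  fixes a :: "real^'p"
  assumes N: "prob_space N" "sets N = sets borel" and var: "vec_variance N \<noteq> 0"
  shows "0 < (\<integral>x. min 1 (dist x a) \<partial>N)"
proof -
  have "(\<integral>x. min 1 (dist x a) \<partial>N) \<noteq> 0"
    using var vec_variance_eq_0_if_AE_eq[OF N AE_eq_if_integral_truncated_dist_eq_0[OF N]] by blast
  moreover have "0 \<le> (\<integral>x. min 1 (dist x a) \<partial>N)"
    by (rule Bochner_Integration.integral_nonneg) simp
  ultimately show ?thesis by linarith
qed

lemma good_outer_estimator_bias_sign:
  fixes f :: "'y \<Rightarrow> real^'p \<Rightarrow> real^'k"
    and \<psi> :: "((nat \<Rightarrow> 'y) \<times> (nat \<Rightarrow> real^'p)) \<Rightarrow> ('y \<Rightarrow> real^'p \<Rightarrow> real^'k) \<Rightarrow> real^'k"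
  assumes "good_outer_estimator s M Q g n D \<psi>" "nested_integrable M Q g f"
  shows "0 \<le> s *\<^sub>R ((\<integral>y. (\<integral>x. f y x \<partial>Q y) \<partial>M) - (\<integral>y. f y (g y) \<partial>M))"
proof -
  have "(\<integral>\<zeta>. \<psi> \<zeta> f \<partial>sample_law M Q n D) = (\<integral>y. f y (g y) \<partial>M)"
    and "0 \<le> s *\<^sub>R ((\<integral>y. (\<integral>x. f y x \<partial>Q y) \<partial>M) - (\<integral>\<zeta>. \<psi> \<zeta> f \<partial>sample_law M Q n D))"
    using assms unfolding good_outer_estimator_def by blast+
  then show ?thesis by simp
qed

lemma no_good_outer_estimator:
  fixes M :: "'y measure"
    and Q :: "'y \<Rightarrow> (real^'p) measure"
    and \<psi> :: "((nat \<Rightarrow> 'y) \<times> (nat \<Rightarrow> real^'p)) \<Rightarrow> ('y \<Rightarrow> real^'p \<Rightarrow> real^'k) \<Rightarrow> real^'k"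
  assumes M: "prob_space M"
    and g[measurable]: "g \<in> borel_measurable M"
    and Q: "Q \<in> M \<rightarrow>\<^sub>M prob_algebra borel"
    and var: "\<forall>y\<in>space M. vec_variance (Q y) \<noteq> 0"
    and s: "s * s = 1"
  shows "\<not> good_outer_estimator s M Q g n D \<psi>"
proof
  assume good: "good_outer_estimator s M Q g n D \<psi>"
  define c where "c y x = min 1 (dist x (g y))" for y x
  define h where "h y = (\<integral>x. c y x \<partial>Q y)" for y
  define f :: "'y \<Rightarrow> real^'p \<Rightarrow> real^'k" where "f y x = (- s * c y x) *\<^sub>R 1" for y x
  have c_meas[measurable]: "(\<lambda>(y, x). c y x) \<in> borel_measurable (M \<Otimes>\<^sub>M borel)"
    unfolding c_def by measurable
  have c_bound: "norm (c y x) \<le> 1" for y x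
    by (simp add: c_def)
  have c_int: "integrable (Q y) (c y)" if "y \<in> space M" for y
    using c_meas Q that c_bound by (rule integrable_kernel_section_bounded)
  have h_int: "integrable M h"
    unfolding h_def using prob_space.finite_measure[OF M] c_meas Q c_bound
    by (rule integrable_kernel_integral_bounded)
  have h_pos: "0 < (\<integral>y. h y \<partial>M)"
  proof (rule prob_space.integral_pos[OF M h_int])
    show "0 < h y" if "y \<in> space M" for y
      using measurable_space[OF Q that] var that unfolding h_def c_def
      by (intro integral_truncated_dist_pos_if_vec_variance_neq_0) (auto simp: space_prob_algebra)
  qed
  have f_int: "nested_integrable M Q g f"
    using prob_space.finite_measure[OF M] Q g
  proof (rule nested_integrable_bounded)
    show "(\<lambda>(y, x). f y x) \<in> borel_measurable (M \<Otimes>\<^sub>M borel)"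
      unfolding f_def by measurable
    show "norm (f y x) \<le> \<bar>s\<bar> * norm (1::real^'k)" for y x
      using c_bound[of y x] by (auto simp: f_def abs_mult intro!: mult_right_mono mult_left_le)
  qed
  have "0 \<le> s *\<^sub>R ((\<integral>y. (\<integral>x. f y x \<partial>Q y) \<partial>M) - (\<integral>y. f y (g y) \<partial>M))"
    using good f_int by (rule good_outer_estimator_bias_sign)
  also have "\<dots> = s *\<^sub>R (\<integral>y. (- s * h y) *\<^sub>R 1 \<partial>M)"
  proof -
    have "(\<integral>x. f y x \<partial>Q y) = (- s * h y) *\<^sub>R 1" if "y \<in> space M" for y
      using c_int[OF that] by (simp add: f_def h_def)
    then show ?thesis
      by (simp add: f_def c_def cong: Bochner_Integration.integral_cong)
  qed
  also have "\<dots> = (- (\<integral>y. h y \<partial>M)) *\<^sub>R 1"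
    using s h_int by simp
  finally have "0 \<le> - (\<integral>y. h y \<partial>M)"
    by (simp only: less_eq_vec_def) simp
  with h_pos show False by simp
qed

theorem theorem3:
  fixes M :: "'y measure"
    and Pz :: "'y \<Rightarrow> 'z measure"
    and \<phi> :: "'y \<Rightarrow> 'z \<Rightarrow> real^'p"
    and Q :: "'y \<Rightarrow> (real^'p) measure"
  assumes "prob_space M"
    and "\<forall>y\<in>space M. prob_space (Pz y)"
    and "\<forall>y\<in>space M. integrable (Pz y) (\<phi> y)"
    and "integrable M (gamma Pz \<phi>)"
    and "Q \<in> M \<rightarrow>\<^sub>M prob_algebra borel"
    and "\<forall>y\<in>space M. integrable (Q y) (\<lambda>x. x)"
    and "\<forall>y\<in>space M. vec_variance (Q y) \<noteq> 0"
  shows "\<not> (\<exists>n D (\<psi> :: ((nat \<Rightarrow> 'y) \<times> (nat \<Rightarrow> real^'p)) \<Rightarrow> ('y \<Rightarrow> real^'p \<Rightarrow> real^'k) \<Rightarrow> real^'k).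
               good_outer_estimator 1 M Q (gamma Pz \<phi>) n D \<psi>)
       \<and> \<not> (\<exists>n D (\<psi> :: ((nat \<Rightarrow> 'y) \<times> (nat \<Rightarrow> real^'p)) \<Rightarrow> ('y \<Rightarrow> real^'p \<Rightarrow> real^'k) \<Rightarrow> real^'k).
               good_outer_estimator (-1) M Q (gamma Pz \<phi>) n D \<psi>)"
proof -
  have "gamma Pz \<phi> \<in> borel_measurable M"
    using assms(4) by (rule borel_measurable_integrable)
  from no_good_outer_estimator[OF assms(1) this assms(5,7)]
  show ?thesis by (metis mult_1 mult_minus_left minus_minus)
qed

end
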